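(* Let $n\ge2$, $F\in\mathcal{F}_{n,n-1}$, $1\le k\le n$, and $a,b\in I_{F,k}$ with $a\ne b$. Then the function $\xi_{a,b}(\lambda)=\lambda_a-\lambda_b$ on $\mathbb{R}^{n+1}$ lies in the real linear span of the functions $\xi_{F,l}(\lambda)=\lambda_{F_l}-\lambda_{F_l^-}$, $k\le l\le n$.
   Context: Coordinates of $\mathbb{R}^{n+1}$ are indexed $\lambda=(\lambda_0,\dots,\lambda_n)$. The set $\mathcal{F}_{n,n-1}$ consists of sequences $F=(i_1,\sigma_1,\dots,i_{n-1},\sigma_{n-1})$ with $\sigma_l\in\{+,-\}$ built inductively: $I_{F,1}=\{0,\dots,n\}$; for each $1\le l\le n-1$, $i_l$ is an element of $I_{F,l}$ which is not its smallest element; writing $F_l:=i_l$ and $F_l^-$ for the largest element of $I_{F,l}$ smaller than $i_l$, set $I_{F,l+1}=I_{F,l}\setminus\{F_l\}$ if $\sigma_l=+$ and $I_{F,l+1}=I_{F,l}\setminus\{F_l^-\}$ if $\sigma_l=-$. The set $I_{F,n}$ has two elements; $F_n^-$ denotes the smaller and $F_n$ the larger. *)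

theory Defs
  imports Complex_Main
begin

text \<open>A sequence F = (i_1,sigma_1,...,i_{n-1},sigma_{n-1}) is a list of pairs (i_l, sigma_l),
  with sigma_l = True meaning + and False meaning -.  Entry l (1-based) is F ! (l-1).\<close>

type_synonym flagseq = "(nat \<times> bool) list"

definition pred_in :: "nat set \<Rightarrow> nat \<Rightarrow> nat" where
  "pred_in I i = Max {j \<in> I. j < i}"

text \<open>Iaux n F m = I_{F,m+1}.\<close>
fun Iaux :: "nat \<Rightarrow> flagseq \<Rightarrow> nat \<Rightarrow> nat set" where
  "Iaux n F 0 = {0..n}"
| "Iaux n F (Suc m) =
     (let I = Iaux n F m; i = fst (F ! m) in
      if snd (F ! m) then I - {i} else I - {pred_in I i})"

definition Iset :: "nat \<Rightarrow> flagseq \<Rightarrow> nat \<Rightarrow> nat set" where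
  "Iset n F l = Iaux n F (l - 1)"

definition valid_F :: "nat \<Rightarrow> flagseq \<Rightarrow> bool" where
  "valid_F n F \<longleftrightarrow> length F = n - 1 \<and>
     (\<forall>l\<in>{1..n-1}. fst (F ! (l-1)) \<in> Iset n F l \<and> fst (F ! (l-1)) \<noteq> Min (Iset n F l))"

definition Fup :: "nat \<Rightarrow> flagseq \<Rightarrow> nat \<Rightarrow> nat" where
  "Fup n F l = (if l \<le> n - 1 then fst (F ! (l-1)) else Max (Iset n F n))"

definition Fdown :: "nat \<Rightarrow> flagseq \<Rightarrow> nat \<Rightarrow> nat" where
  "Fdown n F l = (if l \<le> n - 1 then pred_in (Iset n F l) (fst (F ! (l-1)))
                  else Min (Iset n F n))"

text \<open>xi_{F,l}(lambda) = lambda_{F_l} - lambda_{F_l^-}; lambda in R^{n+1} represented as nat \<Rightarrow> real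
  (only coordinates 0..n are used).\<close>
definition xiF :: "nat \<Rightarrow> flagseq \<Rightarrow> nat \<Rightarrow> (nat \<Rightarrow> real) \<Rightarrow> real" where
  "xiF n F l x = x (Fup n F l) - x (Fdown n F l)"

end

theory Submission
  imports Defs
begin

text \<open>Passing from I_{F,l+1} back to I_{F,l} re-inserts one of F_l, F_l^-, while the other
  one survives in I_{F,l+1}; and I_{F,n} = {F_n^-, F_n}. So, by downward induction on k, a
  difference \<lambda>_a - \<lambda>_b with a, b in I_{F,k} splits through the surviving element into at most
  two differences, each of which is either \<plusminus>\<xi>_{F,k} or a difference of two elements of I_{F,k+1}.\<close>

definition lin_span :: "('i \<Rightarrow> 'a \<Rightarrow> 'b::comm_ring_1) \<Rightarrow> 'i set \<Rightarrow> ('a \<Rightarrow> 'b) set" where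
  "lin_span g L = {f. \<exists>c. \<forall>x. f x = (\<Sum>l\<in>L. c l * g l x)}"

lemma lin_spanI: "(\<And>x. f x = (\<Sum>l\<in>L. c l * g l x)) \<Longrightarrow> f \<in> lin_span g L"
  unfolding lin_span_def by blast

lemma lin_spanE:
  assumes "f \<in> lin_span g L"
  obtains c where "\<And>x. f x = (\<Sum>l\<in>L. c l * g l x)"
  using assms unfolding lin_span_def by blast

lemma lin_span_zero: "(\<lambda>x. 0) \<in> lin_span g L"
  by (rule lin_spanI[where c = "\<lambda>_. 0"]) simp

lemma lin_span_base:
  assumes "finite L" "l \<in> L"
  shows "g l \<in> lin_span g L"
  by (rule lin_spanI[where c = "\<lambda>m. if m = l then 1 else 0"])
    (use assms in \<open>simp add: if_distrib[of "\<lambda>c. c * _"] sum.delta' cong: if_cong\<close>)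

lemma lin_span_add:
  assumes "f \<in> lin_span g L" "h \<in> lin_span g L"
  shows "(\<lambda>x. f x + h x) \<in> lin_span g L"
proof -
  obtain c d where "\<And>x. f x = (\<Sum>l\<in>L. c l * g l x)" "\<And>x. h x = (\<Sum>l\<in>L. d l * g l x)"
    using assms by (metis lin_spanE)
  then show ?thesis
    by (intro lin_spanI[where c = "\<lambda>l. c l + d l"]) (simp add: distrib_right sum.distrib)
qed

lemma lin_span_uminus:
  assumes "f \<in> lin_span g L"
  shows "(\<lambda>x. - f x) \<in> lin_span g L"
proof -
  obtain c where "\<And>x. f x = (\<Sum>l\<in>L. c l * g l x)"
    using assms by (metis lin_spanE)
  then show ?thesis
    by (intro lin_spanI[where c = "\<lambda>l. - c l"]) (simp add: sum_negf)
qed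

lemma lin_span_mono:
  assumes "finite L'" "L \<subseteq> L'"
  shows "lin_span g L \<subseteq> lin_span g L'"
proof
  fix f assume "f \<in> lin_span g L"
  then obtain c where "\<And>x. f x = (\<Sum>l\<in>L. c l * g l x)"
    by (metis lin_spanE)
  then show "f \<in> lin_span g L'"
    using assms by (intro lin_spanI[where c = "\<lambda>l. if l \<in> L then c l else 0"])
      (simp add: if_distrib[of "\<lambda>c. c * _"] sum.inter_restrict[symmetric] Int_absorb1 cong: if_cong)
qed

lemma lin_span_coordinate_diff:
  assumes "finite L" "l \<in> L" "g l = (\<lambda>x. x u - x d)" "{r, s} = {d, u}"
  shows "(\<lambda>x. x r - x s) \<in> lin_span g L"
proof -
  have "(r = d \<and> s = u) \<or> (r = u \<and> s = d)"
    using assms(4) by (auto simp: doubleton_eq_iff)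
  moreover have "(\<lambda>x. x u - x d) \<in> lin_span g L"
    using lin_span_base[OF assms(1,2), of g] assms(3) by simp
  ultimately show ?thesis
    using lin_span_uminus[of "\<lambda>x. x u - x d"] by auto
qed

lemma lin_span_diff_insert:
  assumes J: "\<forall>a\<in>J. \<forall>b\<in>J. (\<lambda>x. x a - x b) \<in> lin_span g L"
    and "s \<in> J" and rs: "(\<lambda>x. x r - x s) \<in> lin_span g L"
    and "a \<in> insert r J" "b \<in> insert r J"
  shows "(\<lambda>x. x a - x b) \<in> lin_span g L"
proof -
  have "(\<lambda>x. x a - x s) \<in> lin_span g L"
    using assms by auto
  moreover have "(\<lambda>x. x s - x b) \<in> lin_span g L"
    using assms lin_span_uminus[OF rs] by auto
  ultimately have "(\<lambda>x. (x a - x s) + (x s - x b)) \<in> lin_span g L"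
    by (rule lin_span_add)
  then show ?thesis
    by simp
qed

lemma finite_Iaux: "finite (Iaux n F m)"
proof (rule finite_subset)
  show "Iaux n F m \<subseteq> {0..n}"
    by (induction m) (auto simp: Let_def)
qed simp

lemma Iset_Suc:
  assumes "1 \<le> l" "l < n"
  shows "Iset n F (Suc l) =
    Iset n F l - {if snd (F ! (l - 1)) then Fup n F l else Fdown n F l}"
proof -
  obtain m where "l = Suc m"
    using assms(1) by (cases l) auto
  then show ?thesis
    using assms by (simp add: Iset_def Fup_def Fdown_def Let_def)
qed

lemma Fup_Fdown_in_Iset:
  assumes "valid_F n F" "1 \<le> l" "l < n"
  shows "Fup n F l \<in> Iset n F l" "Fdown n F l \<in> Iset n F l" "Fdown n F l < Fup n F l"
proof -
  let ?I = "Iset n F l"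
  have "l \<le> n - 1"
    using assms(3) by simp
  have i: "Fup n F l \<in> ?I" "Fup n F l \<noteq> Min ?I"
    using assms unfolding valid_F_def Fup_def by auto
  have fin: "finite ?I"
    by (simp add: Iset_def finite_Iaux)
  then have "Min ?I \<in> {j \<in> ?I. j < Fup n F l}"
    using i by (auto intro: Min_in simp: order_neq_le_trans)
  then have "Max {j \<in> ?I. j < Fup n F l} \<in> {j \<in> ?I. j < Fup n F l}"
    using fin by (intro Max_in) auto
  moreover have "Fdown n F l = Max {j \<in> ?I. j < Fup n F l}"
    using \<open>l \<le> n - 1\<close> by (simp add: Fdown_def Fup_def pred_in_def)
  ultimately show "Fup n F l \<in> ?I" "Fdown n F l \<in> ?I" "Fdown n F l < Fup n F l"
    using i by auto
qed

lemma card_Iset: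
  assumes "valid_F n F" "1 \<le> l" "l \<le> n"
  shows "card (Iset n F l) = n + 2 - l"
  using assms(2,3)
proof (induction l rule: nat_induct_at_least)
  case base
  then show ?case
    by (simp add: Iset_def)
next
  case (Suc l)
  let ?r = "if snd (F ! (l - 1)) then Fup n F l else Fdown n F l"
  have "?r \<in> Iset n F l"
    using Fup_Fdown_in_Iset[OF assms(1) Suc.hyps] Suc.prems by simp
  then have "card (Iset n F (Suc l)) = card (Iset n F l) - 1"
    using Iset_Suc[OF Suc.hyps] Suc.prems by simp
  then show ?case
    using Suc by simp
qed

lemma Iset_last:
  assumes "valid_F n F" "1 \<le> n"
  shows "Iset n F n = {Fdown n F n, Fup n F n}"
proof -
  obtain u v where uv: "Iset n F n = {u, v}" "u \<noteq> v"
    using card_Iset[OF assms(1,2) order_refl] by (auto simp: card_2_iff)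
  have "\<not> n \<le> n - 1"
    using assms(2) by simp
  then have "Fup n F n = max u v" "Fdown n F n = min u v"
    by (simp_all add: Fup_def Fdown_def uv)
  then show ?thesis
    using uv by (auto simp: min_def max_def)
qed

lemma Iset_eq_insert_Suc:
  assumes "valid_F n F" "1 \<le> l" "l < n"
  obtains r s where "Iset n F l = insert r (Iset n F (Suc l))"
    "s \<in> Iset n F (Suc l)" "{r, s} = {Fdown n F l, Fup n F l}"
proof -
  define \<sigma> where "\<sigma> = snd (F ! (l - 1))"
  let ?r = "if \<sigma> then Fup n F l else Fdown n F l"
  let ?s = "if \<sigma> then Fdown n F l else Fup n F l"
  note in_I = Fup_Fdown_in_Iset[OF assms]
  have "Iset n F (Suc l) = Iset n F l - {?r}"
    using Iset_Suc[OF assms(2,3)] by (simp add: \<sigma>_def)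
  then have "Iset n F l = insert ?r (Iset n F (Suc l))" "?s \<in> Iset n F (Suc l)"
    using in_I by auto
  moreover have "{?r, ?s} = {Fdown n F l, Fup n F l}"
    by auto
  ultimately show ?thesis
    using that by blast
qed

lemma xiF_eq: "xiF n F l = (\<lambda>x. x (Fup n F l) - x (Fdown n F l))"
  by (simp add: xiF_def fun_eq_iff)

lemma Iset_diff_in_lin_span:
  assumes "valid_F n F" "1 \<le> k" "k \<le> n"
  shows "\<forall>a\<in>Iset n F k. \<forall>b\<in>Iset n F k. (\<lambda>x. x a - x b) \<in> lin_span (xiF n F) {k..n}"
  using assms(3)
proof (induction k rule: inc_induct)
  case base
  have I: "Iset n F n = insert (Fup n F n) {Fdown n F n}"
    using Iset_last assms by auto
  have J: "\<forall>a\<in>{Fdown n F n}. \<forall>b\<in>{Fdown n F n}. (\<lambda>x. x a - x b) \<in> lin_span (xiF n F) {n..n}"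
    using lin_span_zero by simp
  have rs: "(\<lambda>x. x (Fup n F n) - x (Fdown n F n)) \<in> lin_span (xiF n F) {n..n}"
    by (rule lin_span_coordinate_diff[where g = "xiF n F" and l = n, OF _ _ xiF_eq]) auto
  show ?case
    unfolding I using lin_span_diff_insert[OF J _ rs] by simp
next
  case (step l)
  have l: "1 \<le> l" "l < n"
    using step.hyps assms(2) by auto
  obtain r s where I: "Iset n F l = insert r (Iset n F (Suc l))"
    and s: "s \<in> Iset n F (Suc l)" and rs: "{r, s} = {Fdown n F l, Fup n F l}"
    using Iset_eq_insert_Suc[OF assms(1) l] .
  have "lin_span (xiF n F) {Suc l..n} \<subseteq> lin_span (xiF n F) {l..n}"
    by (rule lin_span_mono) auto
  then have J: "\<forall>a\<in>Iset n F (Suc l). \<forall>b\<in>Iset n F (Suc l). (\<lambda>x. x a - x b) \<in> lin_span (xiF n F) {l..n}"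
    using step.IH by (simp add: subset_iff)
  have rs: "(\<lambda>x. x r - x s) \<in> lin_span (xiF n F) {l..n}"
    using l by (intro lin_span_coordinate_diff[where g = "xiF n F" and l = l, OF _ _ xiF_eq rs]) auto
  show ?case
    unfolding I using lin_span_diff_insert[OF J s rs] by simp
qed

theorem lemma5p8:
  fixes n k a b :: nat and F :: flagseq
  assumes "n \<ge> 2" and "valid_F n F" and "1 \<le> k" and "k \<le> n"
    and "a \<in> Iset n F k" and "b \<in> Iset n F k" and "a \<noteq> b"
  shows "\<exists>c :: nat \<Rightarrow> real. \<forall>x :: nat \<Rightarrow> real.
           x a - x b = (\<Sum>l\<in>{k..n}. c l * xiF n F l x)"
  using Iset_diff_in_lin_span[OF assms(2-4)] assms(5,6) unfolding lin_span_def by blast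

end
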